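(* Let $U,M_1,M_2$ be as below, let $M_3$ be as below, set $M_4=M_1U$, $M_5=M_2U$, and let $G'_E$ be the semigroup generated by $M_1,\dots,M_5$, where $$U=\begin{bmatrix}-1&1&0\\0&1&0\\0&0&1\end{bmatrix},\ M_1=\begin{bmatrix}3&-4&4\\7&-7&8\\6&-6&7\end{bmatrix},\ M_2=\begin{bmatrix}-4&3&4\\-7&7&8\\-6&6&7\end{bmatrix},\ M_3=\begin{bmatrix}1&3&4\\0&7&8\\0&6&7\end{bmatrix}.$$ For $M\in G'_E$ and an associated pair $\langle a,b,c\rangle\in\mathfrak{P}_E$, define $M\langle a,b,c\rangle$ to be the associated pair containing the triple $M(a,b,c)_u$, where $(a,b,c)_u$ is the upper triple of $\langle a,b,c\rangle$ and $M(a,b,c)_u$ is the matrix product with the column vector. Then this defines an action of $G'_E$ on $\mathfrak{P}_E$.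
   Context: An Eisenstein triple is a triple $(a,b,c)\in\mathbb{Z}^3_{\ge0}\setminus\{(0,0,0)\}$ with $a^2-ab+b^2=c^2$; it is primitive if $a\le b$ and $\gcd(a,b,c)=1$. For a primitive Eisenstein triple $(a,b,c)$, $(b-a,b,c)$ is also one; the unordered pair of these two triples is the associated pair $\langle a,b,c\rangle$, and $\mathfrak{P}_E$ is the set of all associated pairs. In an associated pair, the triple with $b>2a$ is called the upper triple, denoted $(a,b,c)_u$. *)

theory Defs
  imports "HOL-Analysis.Analysis"
begin

type_synonym triple = "int \<times> int \<times> int"

definition eisenstein_triple :: "triple \<Rightarrow> bool" where
  "eisenstein_triple t = (case t of (a, b, c) \<Rightarrow>
     a \<ge> 0 \<and> b \<ge> 0 \<and> c \<ge> 0 \<and> (a, b, c) \<noteq> (0, 0, 0) \<and> a^2 - a*b + b^2 = c^2)"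

definition primitive_eisenstein :: "triple \<Rightarrow> bool" where
  "primitive_eisenstein t = (case t of (a, b, c) \<Rightarrow>
     eisenstein_triple (a, b, c) \<and> a \<le> b \<and> gcd (gcd a b) c = 1)"

definition assoc_pair :: "triple \<Rightarrow> triple set" where
  "assoc_pair t = (case t of (a, b, c) \<Rightarrow> {(a, b, c), (b - a, b, c)})"

definition PE :: "triple set set" where
  "PE = assoc_pair ` {t. primitive_eisenstein t}"

definition upper :: "triple set \<Rightarrow> triple" where
  "upper P = (THE t. t \<in> P \<and> (case t of (a, b, c) \<Rightarrow> b > 2 * a))"

definition mat_app :: "int^3^3 \<Rightarrow> triple \<Rightarrow> triple" where
  "mat_app M t = (case t of (a, b, c) \<Rightarrow>
     (let v = M *v vector [a, b, c] in (v$1, v$2, v$3)))"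

definition U_mat :: "int^3^3" where
  "U_mat = vector [vector [-1, 1, 0], vector [0, 1, 0], vector [0, 0, 1]]"

definition M1 :: "int^3^3" where
  "M1 = vector [vector [3, -4, 4], vector [7, -7, 8], vector [6, -6, 7]]"

definition M2 :: "int^3^3" where
  "M2 = vector [vector [-4, 3, 4], vector [-7, 7, 8], vector [-6, 6, 7]]"

definition M3 :: "int^3^3" where
  "M3 = vector [vector [1, 3, 4], vector [0, 7, 8], vector [0, 6, 7]]"

definition M4 :: "int^3^3" where
  "M4 = M1 ** U_mat"

definition M5 :: "int^3^3" where
  "M5 = M2 ** U_mat"

inductive_set GE' :: "(int^3^3) set" where
  gen: "M \<in> {M1, M2, M3, M4, M5} \<Longrightarrow> M \<in> GE'"
| mult: "M \<in> GE' \<Longrightarrow> N \<in> GE' \<Longrightarrow> M ** N \<in> GE'"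

definition act :: "int^3^3 \<Rightarrow> triple set \<Rightarrow> triple set" where
  "act M P = (THE Q. Q \<in> PE \<and> mat_app M (upper P) \<in> Q)"

end

theory Submission imports Defs begin

(* Every generator is an integral automorphism of the Eisenstein form a^2 - ab + b^2 - c^2, so it
   preserves both the equation and primitivity (the gcd of the entries), and a direct estimate shows
   that it maps upper triples (0 <= a, 2a < b) into upper triples.  Hence G'_E maps upper primitive
   triples to upper primitive triples.  Each associated pair contains exactly one upper triple (the
   case b = 2a is excluded by primitivity, since it forces 3 | a and 3 | c), so the pair M<a,b,c>
   exists, is unique, and its upper triple is M(a,b,c)_u; compatibility with products is then just
   associativity of the matrix product. *)

lemma vector_3_nth: "vector [v$1, v$2, v$3] = (v::'a::zero^3)"
  by (simp add: vec_eq_iff forall_3 vector_3)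

lemma mat_app_mult: "mat_app (A ** B) t = mat_app A (mat_app B t)"
  by (cases t) (simp add: mat_app_def Let_def vector_3_nth matrix_vector_mul_assoc)

lemma mat_app_mat_1: "mat_app (mat 1) t = t"
  by (cases t) (simp add: mat_app_def vector_3_nth)

lemma mat_app_U_mat: "mat_app U_mat (a, b, c) = (b - a, b, c)"
  by (simp add: mat_app_def U_mat_def matrix_vector_mult_def sum_3 vector_3)

lemma mat_app_M1: "mat_app M1 (a, b, c) = (3*a - 4*b + 4*c, 7*a - 7*b + 8*c, 6*a - 6*b + 7*c)"
  by (simp add: mat_app_def M1_def matrix_vector_mult_def sum_3 vector_3)

lemma mat_app_M2: "mat_app M2 (a, b, c) = (-4*a + 3*b + 4*c, -7*a + 7*b + 8*c, -6*a + 6*b + 7*c)"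
  by (simp add: mat_app_def M2_def matrix_vector_mult_def sum_3 vector_3)

lemma mat_app_M3: "mat_app M3 (a, b, c) = (a + 3*b + 4*c, 7*b + 8*c, 6*b + 7*c)"
  by (simp add: mat_app_def M3_def matrix_vector_mult_def sum_3 vector_3)

lemma mat_app_M4: "mat_app M4 (a, b, c) = (-3*a - b + 4*c, -7*a + 8*c, -6*a + 7*c)"
  by (simp add: M4_def mat_app_mult mat_app_U_mat mat_app_M1 algebra_simps)

lemma mat_app_M5: "mat_app M5 (a, b, c) = (4*a - b + 4*c, 7*a + 8*c, 6*a + 7*c)"
  by (simp add: M5_def mat_app_mult mat_app_U_mat mat_app_M2 algebra_simps)

definition eisenstein_form :: "triple \<Rightarrow> int" where
  "eisenstein_form t = (case t of (a, b, c) \<Rightarrow> a^2 - a*b + b^2 - c^2)"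

definition triple_gcd :: "triple \<Rightarrow> int" where
  "triple_gcd t = (case t of (a, b, c) \<Rightarrow> gcd (gcd a b) c)"

lemma triple_gcd_dvd_mat_app: "triple_gcd t dvd triple_gcd (mat_app M t)"
proof (cases t)
  case (fields a b c)
  define g where "g = gcd (gcd a b) c"
  define v where "v = M *v vector [a, b, c]"
  have "g dvd a" "g dvd b" "g dvd c"
    unfolding g_def by (meson dvd_trans gcd_dvd1 gcd_dvd2)+
  then have "g dvd vector [a, b, c] $ j" for j :: 3
    using exhaust_3[of j] by (auto simp: vector_3)
  then have "g dvd v $ i" for i
    unfolding v_def by (simp add: matrix_vector_mult_def dvd_sum)
  then show ?thesis
    by (simp add: fields mat_app_def triple_gcd_def g_def[symmetric] v_def[symmetric])
qed

lemma triple_gcd_nonneg: "0 \<le> triple_gcd t"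
  by (cases t) (simp add: triple_gcd_def)

lemma triple_gcd_mat_app_left_inverse:
  assumes "N ** M = mat 1"
  shows "triple_gcd (mat_app M t) = triple_gcd t"
proof (rule zdvd_antisym_nonneg)
  have "triple_gcd (mat_app M t) dvd triple_gcd (mat_app N (mat_app M t))"
    by (rule triple_gcd_dvd_mat_app)
  then show "triple_gcd (mat_app M t) dvd triple_gcd t"
    by (simp add: mat_app_mult[symmetric] assms mat_app_mat_1)
qed (simp_all add: triple_gcd_dvd_mat_app triple_gcd_nonneg)

definition eisenstein_automorphism :: "int^3^3 \<Rightarrow> bool" where
  "eisenstein_automorphism M \<longleftrightarrow>
     (\<exists>N. N ** M = mat 1) \<and> (\<forall>t. eisenstein_form (mat_app M t) = eisenstein_form t)"

lemma eisenstein_automorphism_mult: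
  assumes "eisenstein_automorphism M" "eisenstein_automorphism M'"
  shows "eisenstein_automorphism (M ** M')"
proof -
  obtain N N' where "N ** M = mat 1" "N' ** M' = mat 1"
    using assms by (auto simp: eisenstein_automorphism_def)
  then have "(N' ** N) ** (M ** M') = mat 1"
    by (metis matrix_mul_assoc matrix_mul_lid)
  moreover have "eisenstein_form (mat_app (M ** M') t) = eisenstein_form t" for t
    using assms unfolding eisenstein_automorphism_def by (metis mat_app_mult)
  ultimately show ?thesis
    unfolding eisenstein_automorphism_def by blast
qed

lemma eisenstein_automorphismI:
  assumes "N ** M = mat 1"
    and "\<And>a b c. eisenstein_form (mat_app M (a, b, c)) = eisenstein_form (a, b, c)"
  shows "eisenstein_automorphism M"
  using assms by (auto simp: eisenstein_automorphism_def)

lemma eisenstein_automorphism_U_mat: "eisenstein_automorphism U_mat"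
  by (rule eisenstein_automorphismI[where N = U_mat],
      simp add: U_mat_def matrix_matrix_mult_def vec_eq_iff forall_3 sum_3 vector_3 mat_def,
      simp add: mat_app_U_mat eisenstein_form_def power2_eq_square algebra_simps)

lemma eisenstein_automorphism_M1: "eisenstein_automorphism M1"
  by (rule eisenstein_automorphismI
        [where N = "vector [vector [-1, 4, -4], vector [-1, -3, 4], vector [0, -6, 7]]"],
      simp add: M1_def matrix_matrix_mult_def vec_eq_iff forall_3 sum_3 vector_3 mat_def,
      simp add: mat_app_M1 eisenstein_form_def power2_eq_square algebra_simps)

lemma eisenstein_automorphism_M2: "eisenstein_automorphism M2"
  by (rule eisenstein_automorphismI
        [where N = "vector [vector [-1, -3, 4], vector [-1, 4, -4], vector [0, -6, 7]]"],
      simp add: M2_def matrix_matrix_mult_def vec_eq_iff forall_3 sum_3 vector_3 mat_def,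
      simp add: mat_app_M2 eisenstein_form_def power2_eq_square algebra_simps)

lemma eisenstein_automorphism_M3: "eisenstein_automorphism M3"
  by (rule eisenstein_automorphismI
        [where N = "vector [vector [1, 3, -4], vector [0, 7, -8], vector [0, -6, 7]]"],
      simp add: M3_def matrix_matrix_mult_def vec_eq_iff forall_3 sum_3 vector_3 mat_def,
      simp add: mat_app_M3 eisenstein_form_def power2_eq_square algebra_simps)

lemma GE'_eisenstein_automorphism: "M \<in> GE' \<Longrightarrow> eisenstein_automorphism M"
proof (induction rule: GE'.induct)
  case (gen M)
  then show ?case
    unfolding M4_def M5_def
    using eisenstein_automorphism_M1 eisenstein_automorphism_M2 eisenstein_automorphism_M3
      eisenstein_automorphism_U_mat eisenstein_automorphism_mult by blast
next
  case (mult M N)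
  then show ?case by (intro eisenstein_automorphism_mult)
qed

definition upper_sector :: "triple \<Rightarrow> bool" where
  "upper_sector t \<longleftrightarrow> (case t of (a, b, c) \<Rightarrow> 0 \<le> a \<and> 2*a < b \<and> 0 \<le> c)"

definition upper_primitive :: "triple \<Rightarrow> bool" where
  "upper_primitive t \<longleftrightarrow> upper_sector t \<and> eisenstein_form t = 0 \<and> triple_gcd t = 1"

lemma upper_primitive_iff:
  "upper_primitive (a, b, c) \<longleftrightarrow>
     0 \<le> a \<and> 2*a < b \<and> 0 \<le> c \<and> a^2 - a*b + b^2 = c^2 \<and> gcd (gcd a b) c = 1"
  by (auto simp: upper_primitive_def upper_sector_def eisenstein_form_def triple_gcd_def)

lemma upper_primitive_mat_app_automorphism:
  assumes "eisenstein_automorphism M" "upper_primitive t" "upper_sector (mat_app M t)"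
  shows "upper_primitive (mat_app M t)"
proof -
  obtain N where "N ** M = mat 1" and "eisenstein_form (mat_app M t) = eisenstein_form t"
    using assms(1) unfolding eisenstein_automorphism_def by blast
  then show ?thesis
    using assms(2,3) triple_gcd_mat_app_left_inverse unfolding upper_primitive_def by metis
qed

lemma eisenstein_bounds:
  fixes a b c :: int
  assumes "0 \<le> a" "a \<le> b" "0 \<le> c" and eq: "a^2 - a*b + b^2 = c^2"
  shows "b - a \<le> c" "4*b - 3*a \<le> 4*c" "3*a + b \<le> 4*c"
proof -
  have "0 \<le> a*b" "0 \<le> a*a" "0 \<le> (15*b - 7*a) * (b - a)"
    using assms(1,2) by simp_all
  moreover have "(b - a)^2 = (a^2 - a*b + b^2) - a*b"
    and "(4*b - 3*a)^2 = 16*(a^2 - a*b + b^2) - (8*(a*b) + 7*(a*a))"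
    and "(3*a + b)^2 = 16*(a^2 - a*b + b^2) - (15*b - 7*a) * (b - a)"
    and "(4*c)^2 = 16*c^2"
    by (simp_all add: power2_eq_square algebra_simps)
  ultimately have "(b - a)^2 \<le> c^2" "(4*b - 3*a)^2 \<le> (4*c)^2" "(3*a + b)^2 \<le> (4*c)^2"
    unfolding eq by linarith+
  then show "b - a \<le> c" "4*b - 3*a \<le> 4*c" "3*a + b \<le> 4*c"
    using \<open>0 \<le> c\<close> by (auto intro: power2_le_imp_le)
qed

lemma upper_sector_mat_app_generator:
  assumes "M \<in> {M1, M2, M3, M4, M5}" "upper_primitive t"
  shows "upper_sector (mat_app M t)"
proof -
  obtain a b c where t: "t = (a, b, c)"
    using prod_cases3 by blast
  then have abc: "0 \<le> a" "2*a < b" "0 \<le> c" "a^2 - a*b + b^2 = c^2"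
    using assms(2) by (simp_all add: upper_primitive_iff)
  note bounds = eisenstein_bounds[of a b c]
  show ?thesis
    using assms(1) abc bounds
    by (auto simp: t upper_sector_def mat_app_M1 mat_app_M2 mat_app_M3 mat_app_M4 mat_app_M5)
qed

lemma GE'_upper_primitive: "M \<in> GE' \<Longrightarrow> upper_primitive t \<Longrightarrow> upper_primitive (mat_app M t)"
proof (induction M arbitrary: t rule: GE'.induct)
  case (gen M)
  then show ?case
    using upper_primitive_mat_app_automorphism upper_sector_mat_app_generator
      GE'_eisenstein_automorphism GE'.gen by blast
next
  case (mult M N)
  then show ?case by (simp add: mat_app_mult)
qed

lemma primitive_eisenstein_not_double:
  assumes "primitive_eisenstein (a, b, c)"
  shows "b \<noteq> 2*a"
proof
  assume "b = 2*a"
  then have eq: "c^2 = 3*a^2" and coprime: "gcd a c = 1"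
    using assms by (auto simp: primitive_eisenstein_def eisenstein_triple_def power2_eq_square
        algebra_simps gcd.commute)
  have three: "prime (3::int)" by simp
  then have "3 dvd c"
    using eq prime_dvd_power[of 3 c 2] by simp
  then obtain k where "c = 3*k" ..
  then have "a^2 = 3*k^2"
    using eq by (simp add: power2_eq_square)
  then have "3 dvd a"
    using three prime_dvd_power[of 3 a 2] by simp
  with \<open>3 dvd c\<close> have "3 dvd gcd a c" by simp
  then show False
    using coprime by simp
qed

lemma upper_assoc_pair:
  assumes "2*a < b"
  shows "upper (assoc_pair (a, b, c)) = (a, b, c)"
  unfolding upper_def assoc_pair_def
  by (rule the_equality) (use assms in auto)

lemma PE_eq_assoc_pair_of_mem: "Q \<in> PE \<Longrightarrow> (a, b, c) \<in> Q \<Longrightarrow> Q = assoc_pair (a, b, c)"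
  by (auto simp: PE_def assoc_pair_def)

lemma PE_upper_primitive:
  assumes "P \<in> PE"
  shows "upper_primitive (upper P)"
proof -
  obtain a b c where P: "P = assoc_pair (a, b, c)" and prim: "primitive_eisenstein (a, b, c)"
    using assms by (auto simp: PE_def)
  have abc: "0 \<le> a" "a \<le> b" "0 \<le> c" "a^2 - a*b + b^2 = c^2" "gcd (gcd a b) c = 1"
    using prim by (auto simp: primitive_eisenstein_def eisenstein_triple_def)
  consider "2*a < b" | "b < 2*a"
    using primitive_eisenstein_not_double[OF prim] by linarith
  then show ?thesis
  proof cases
    case 1
    then show ?thesis
      using abc P upper_assoc_pair by (simp add: upper_primitive_iff)
  next
    case 2
    have "P = assoc_pair (b - a, b, c)"
      using P by (auto simp: assoc_pair_def)
    then have "upper P = (b - a, b, c)"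
      using 2 upper_assoc_pair[of "b - a" b c] by simp
    then show ?thesis
      using abc 2 gcd_diff2[of b a]
      by (simp add: upper_primitive_iff power2_eq_square algebra_simps)
  qed
qed

lemma upper_primitive_ex1_PE:
  assumes "upper_primitive t"
  shows "\<exists>!Q. Q \<in> PE \<and> t \<in> Q"
proof -
  obtain a b c where t: "t = (a, b, c)"
    using prod_cases3 by blast
  have "primitive_eisenstein t"
    using assms by (auto simp: t upper_primitive_iff primitive_eisenstein_def eisenstein_triple_def)
  then have "assoc_pair t \<in> PE \<and> t \<in> assoc_pair t"
    by (auto simp: PE_def t assoc_pair_def)
  then show ?thesis
    using PE_eq_assoc_pair_of_mem unfolding t by blast
qed

lemma act_eq_assoc_pair:
  assumes "upper_primitive (mat_app M (upper P))"
  shows "act M P = assoc_pair (mat_app M (upper P))"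
proof -
  obtain a b c where s: "mat_app M (upper P) = (a, b, c)"
    using prod_cases3 by blast
  have "act M P \<in> PE \<and> (a, b, c) \<in> act M P"
    unfolding act_def using theI'[OF upper_primitive_ex1_PE[OF assms]] by (simp add: s)
  then show ?thesis
    using PE_eq_assoc_pair_of_mem s by auto
qed

lemma upper_act:
  assumes "upper_primitive (mat_app M (upper P))"
  shows "upper (act M P) = mat_app M (upper P)"
proof -
  obtain a b c where s: "mat_app M (upper P) = (a, b, c)"
    using prod_cases3 by blast
  then show ?thesis
    using act_eq_assoc_pair[OF assms] assms upper_assoc_pair[of a b c]
    by (simp add: upper_primitive_iff)
qed

theorem lemma6p3:
  shows "\<forall>M\<in>GE'. \<forall>P\<in>PE.
           (\<exists>!Q. Q \<in> PE \<and> mat_app M (upper P) \<in> Q)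
         \<and> (\<forall>N\<in>GE'. act (M ** N) P = act M (act N P))"
proof (intro ballI conjI)
  fix M N P
  assume M: "M \<in> GE'" and P: "P \<in> PE"
  have upper_P: "upper_primitive (upper P)"
    using PE_upper_primitive[OF P] .
  show "\<exists>!Q. Q \<in> PE \<and> mat_app M (upper P) \<in> Q"
    by (rule upper_primitive_ex1_PE[OF GE'_upper_primitive[OF M upper_P]])
  assume N: "N \<in> GE'"
  have NP: "upper_primitive (mat_app N (upper P))"
    using GE'_upper_primitive[OF N upper_P] .
  have MNP: "upper_primitive (mat_app M (mat_app N (upper P)))"
    using GE'_upper_primitive[OF M NP] .
  have "act (M ** N) P = assoc_pair (mat_app M (mat_app N (upper P)))"
    using act_eq_assoc_pair[of "M ** N" P] MNP by (simp add: mat_app_mult)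
  also have "\<dots> = act M (act N P)"
    using act_eq_assoc_pair[of M "act N P"] MNP by (simp add: upper_act[OF NP])
  finally show "act (M ** N) P = act M (act N P)" .
qed

end
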